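(* Let $H\ge2$ be an integer and consider an $H$-round online first-price auction in which $v_t=1$ for all $t\in\{1,\dots,H\}$ and \[ m_t=\begin{cases}0,& t<\tau,\\ \delta,&\tau\le t\le H,\end{cases} \] where $\tau$ is drawn uniformly at random from $\{1,2,\dots,H\}$ and $\delta=\frac1H$. Then every non-anticipatory (admissible) policy has expected dynamic regret at least $\frac12-\frac1{2H}$, i.e. \[ \mathbb{E}\left[\sum_{t=1}^H\max\{v_t-m_t,0\}-\sum_{t=1}^H r(b_t;v_t,m_t)\right]\ge\frac12-\frac1{2H}, \] the expectation being over $\tau$ and the policy's randomness.
   Context: In an $H$-round online first-price auction, at each round $t$ the learner observes its value $v_t\in[0,1]$, submits a bid $b_t\in[0,1]$, then observes $m_t\in[0,1]$, the highest bid of the other bidders, and receives reward $r(b_t;v_t,m_t)$ with $r(b;v,m)\coloneqq(v-b)\mathbbm{1}(b\ge m)$. A non-anticipatory (admissible) policy chooses $b_t=\pi_t((v_s,m_s)_{s=1}^{t-1},v_t,U)$ for measurable functions $\pi_t$ and an internal random variable $U$ independent of $\tau$. *)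

theory Defs
  imports "HOL-Probability.Probability"
begin

definition reward :: "real \<Rightarrow> real \<Rightarrow> real \<Rightarrow> real" where
  "reward b v m = (v - b) * (if b \<ge> m then 1 else 0)"

definition mbid :: "nat \<Rightarrow> nat \<Rightarrow> nat \<Rightarrow> real" where
  "mbid H tau t = (if t < tau then 0 else 1 / real H)"

definition vval :: "nat \<Rightarrow> real" where
  "vval t = 1"

definition hist :: "nat \<Rightarrow> nat \<Rightarrow> nat \<Rightarrow> (real \<times> real) list" where
  "hist H tau t = map (\<lambda>s. (vval s, mbid H tau s)) [1..<t]"

text \<open>A policy pol: round t, history, current value, internal randomness u gives a bid.\<close>
definition bid :: "(nat \<Rightarrow> (real \<times> real) list \<Rightarrow> real \<Rightarrow> 'u \<Rightarrow> real)
    \<Rightarrow> nat \<Rightarrow> nat \<Rightarrow> nat \<Rightarrow> 'u \<Rightarrow> real" where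
  "bid pol H tau t u = pol t (hist H tau t) (vval t) u"

definition dyn_regret :: "(nat \<Rightarrow> (real \<times> real) list \<Rightarrow> real \<Rightarrow> 'u \<Rightarrow> real)
    \<Rightarrow> nat \<Rightarrow> nat \<Rightarrow> 'u \<Rightarrow> real" where
  "dyn_regret pol H tau u =
     (\<Sum>t=1..H. max (vval t - mbid H tau t) 0)
     - (\<Sum>t=1..H. reward (bid pol H tau t u) (vval t) (mbid H tau t))"

end

(* Fix a realisation u of the policy's internal randomness and let \<beta>_t be the bid it places in
   round t after observing m = 0 in all earlier rounds; by non-anticipation this is the actual
   bid in every round t \<le> \<tau>. With the switch at \<tau>, each round t < \<tau> costs regret \<beta>_t, and
   round \<tau> costs \<beta>_\<tau> - \<delta> if \<beta>_\<tau> \<ge> \<delta> and 1 - \<delta> otherwise. Summed over \<tau>, the bid \<beta>_t is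
   charged H - t times before the switch and once at it, which costs at least (H - t) \<delta> either
   way; summing over t gives (H - 1) / 2, i.e. average regret 1/2 - 1/(2H) for every u. *)

theory Submission
  imports Defs
begin

lemma sum_prefix_sums:
  fixes a :: "nat \<Rightarrow> 'a::comm_ring_1"
  shows "(\<Sum>k=1..n. \<Sum>i\<in>{1..<k}. a i) = (\<Sum>i=1..n. (of_nat n - of_nat i) * a i)"
proof (induction n)
  case (Suc n)
  have "(\<Sum>i=1..Suc n. (of_nat (Suc n) - of_nat i) * a i)
      = (\<Sum>i=1..n. (of_nat n - of_nat i) * a i) + (\<Sum>i\<in>{1..<Suc n}. a i)"
    by (simp add: algebra_simps sum.distrib[symmetric] atLeastLessThanSuc_atLeastAtMost)
  with Suc show ?case by simp
qed simp

lemma sum_distances_to_end: "(\<Sum>i=1..n. (real n - real i)) = real n * (real n - 1) / 2"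
  using double_gauss_sum_from_Suc_0[of n, where ?'a = real]
  by (simp add: sum_subtractf algebra_simps)

definition instant_regret :: "real \<Rightarrow> real \<Rightarrow> real \<Rightarrow> real" where
  "instant_regret b v m = max (v - m) 0 - reward b v m"

lemma instant_regret_bounds:
  assumes "0 \<le> b" "b \<le> 1" "0 \<le> v" "v \<le> 1" "0 \<le> m" "m \<le> 1"
  shows "0 \<le> instant_regret b v m" and "instant_regret b v m \<le> 1"
  using assms by (auto simp: instant_regret_def reward_def)

lemma instant_regret_no_competition:
  assumes "0 \<le> b" "0 \<le> v"
  shows "instant_regret b v 0 = b"
  using assms by (simp add: instant_regret_def reward_def)

lemma instant_regret_tradeoff:
  fixes k \<delta> a :: real
  assumes "0 \<le> k" "0 \<le> a" "(k + 1) * \<delta> \<le> 1"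
  shows "k * \<delta> \<le> k * a + instant_regret a 1 \<delta>"
proof -
  have "\<delta> \<le> 1"
  proof (cases "\<delta> \<le> 0")
    case False
    then have "0 \<le> k * \<delta>" using assms(1) by simp
    then show ?thesis using assms(3) by (simp add: algebra_simps)
  qed simp
  then have regret: "instant_regret a 1 \<delta> = 1 - \<delta> - (1 - a) * (if \<delta> \<le> a then 1 else 0)"
    by (simp add: instant_regret_def reward_def)
  show ?thesis
  proof (cases "\<delta> \<le> a")
    case True
    have "(k + 1) * \<delta> \<le> (k + 1) * a"
      using True assms(1) by (intro mult_left_mono) auto
    then show ?thesis using True regret by (simp add: algebra_simps)
  next
    case False
    have "0 \<le> k * a" using assms(1,2) by simp
    then show ?thesis using False regret assms(3) by (simp add: algebra_simps)
  qed
qed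

lemma dyn_regret_eq_sum_instant_regret:
  "dyn_regret pol H tau u
     = (\<Sum>t=1..H. instant_regret (bid pol H tau t u) (vval t) (mbid H tau t))"
  by (simp add: dyn_regret_def instant_regret_def sum_subtractf)

lemma mbid_bounds: "0 \<le> mbid H tau t" "mbid H tau t \<le> 1"
  by (cases H; simp add: mbid_def)+

lemma instant_regret_round_bounds:
  assumes "\<And>t h v u. 0 \<le> pol t h v u \<and> pol t h v u \<le> 1"
  shows "0 \<le> instant_regret (bid pol H tau t u) (vval t) (mbid H tau t)"
    and "instant_regret (bid pol H tau t u) (vval t) (mbid H tau t) \<le> 1"
  using instant_regret_bounds[of "bid pol H tau t u" "vval t" "mbid H tau t"]
    assms[of t "hist H tau t" "vval t" u] mbid_bounds
  by (simp_all add: bid_def vval_def)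

lemma dyn_regret_bounds:
  assumes "\<And>t h v u. 0 \<le> pol t h v u \<and> pol t h v u \<le> 1"
  shows "0 \<le> dyn_regret pol H tau u" and "dyn_regret pol H tau u \<le> real H"
proof -
  let ?r = "\<lambda>t. instant_regret (bid pol H tau t u) (vval t) (mbid H tau t)"
  note round = instant_regret_round_bounds[of pol, OF assms]
  show "0 \<le> dyn_regret pol H tau u"
    unfolding dyn_regret_eq_sum_instant_regret using round(1) by (rule sum_nonneg)
  show "dyn_regret pol H tau u \<le> real H"
    unfolding dyn_regret_eq_sum_instant_regret using round(2) sum_bounded_above[of "{1..H}" ?r 1]
    by simp
qed

lemma integrable_dyn_regret:
  assumes "finite_measure M"
    and "\<And>t h v. (\<lambda>u. pol t h v u) \<in> borel_measurable M"
    and "\<And>t h v u. 0 \<le> pol t h v u \<and> pol t h v u \<le> 1"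
  shows "integrable M (dyn_regret pol H tau)"
proof -
  have [measurable]: "(\<lambda>u. bid pol H tau t u) \<in> borel_measurable M" for t
    unfolding bid_def by (rule assms(2))
  have "dyn_regret pol H tau \<in> borel_measurable M"
    unfolding dyn_regret_def reward_def by measurable
  then show ?thesis
    using dyn_regret_bounds[of pol, OF assms(3)]
    by (intro finite_measure.integrable_const_bound[OF assms(1), where B = "real H"]) auto
qed

definition bid_before_switch :: "(nat \<Rightarrow> (real \<times> real) list \<Rightarrow> real \<Rightarrow> 'u \<Rightarrow> real)
    \<Rightarrow> nat \<Rightarrow> 'u \<Rightarrow> nat \<Rightarrow> real" where
  "bid_before_switch pol H u t = pol t (hist H t t) 1 u"

lemma bid_eq_bid_before_switch:
  assumes "t \<le> tau"
  shows "bid pol H tau t u = bid_before_switch pol H u t"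
proof -
  have "hist H tau t = hist H t t"
    using assms by (auto simp: hist_def mbid_def)
  then show ?thesis
    by (simp add: bid_def bid_before_switch_def vval_def)
qed

lemma dyn_regret_ge_switch_round:
  assumes "1 \<le> tau" "tau \<le> H"
    and pol_range: "\<And>t h v u. 0 \<le> pol t h v u \<and> pol t h v u \<le> 1"
  shows "(\<Sum>t\<in>{1..<tau}. bid_before_switch pol H u t)
           + instant_regret (bid_before_switch pol H u tau) 1 (1 / real H)
         \<le> dyn_regret pol H tau u"
proof -
  define r where "r t = instant_regret (bid pol H tau t u) (vval t) (mbid H tau t)" for t
  have r_nonneg: "0 \<le> r t" for t
    unfolding r_def by (rule instant_regret_round_bounds(1)[of pol, OF pol_range])
  have r_before: "r t = bid_before_switch pol H u t" if "t < tau" for t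
  proof -
    have "r t = instant_regret (bid_before_switch pol H u t) 1 0"
      using that by (simp add: r_def vval_def mbid_def bid_eq_bid_before_switch)
    also have "\<dots> = bid_before_switch pol H u t"
      using pol_range by (intro instant_regret_no_competition) (auto simp: bid_before_switch_def)
    finally show ?thesis .
  qed
  have r_switch: "r tau = instant_regret (bid_before_switch pol H u tau) 1 (1 / real H)"
    by (simp add: r_def vval_def mbid_def bid_eq_bid_before_switch)
  have "(\<Sum>t\<in>{1..<tau}. bid_before_switch pol H u t)
          + instant_regret (bid_before_switch pol H u tau) 1 (1 / real H)
      = (\<Sum>t\<in>{1..<tau}. r t) + r tau"
    using r_before r_switch by simp
  also have "\<dots> = (\<Sum>t=1..tau. r t)"
    using assms(1) by (simp add: sum.atLeastLessThan_Suc atLeastLessThanSuc_atLeastAtMost[symmetric])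
  also have "\<dots> \<le> (\<Sum>t=1..H. r t)"
    using assms(2) r_nonneg by (intro sum_mono2) auto
  also have "\<dots> = dyn_regret pol H tau u"
    by (simp add: r_def dyn_regret_eq_sum_instant_regret)
  finally show ?thesis .
qed

lemma sum_dyn_regret_ge:
  assumes "1 \<le> H"
    and pol_range: "\<And>t h v u. 0 \<le> pol t h v u \<and> pol t h v u \<le> 1"
  shows "(real H - 1) / 2 \<le> (\<Sum>tau=1..H. dyn_regret pol H tau u)"
proof -
  let ?\<beta> = "bid_before_switch pol H u"
  have "(real H - 1) / 2 = (\<Sum>t=1..H. (real H - real t) * (1 / real H))"
    using assms(1) unfolding sum_distrib_right[symmetric] sum_distances_to_end
    by (simp add: field_simps)
  also have "\<dots> \<le> (\<Sum>t=1..H. (real H - real t) * ?\<beta> t + instant_regret (?\<beta> t) 1 (1 / real H))"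
    using pol_range by (intro sum_mono instant_regret_tradeoff)
      (auto simp: bid_before_switch_def field_simps)
  also have "\<dots> = (\<Sum>tau=1..H. (\<Sum>t\<in>{1..<tau}. ?\<beta> t) + instant_regret (?\<beta> tau) 1 (1 / real H))"
    by (simp only: sum.distrib sum_prefix_sums)
  also have "\<dots> \<le> (\<Sum>tau=1..H. dyn_regret pol H tau u)"
    using pol_range by (intro sum_mono dyn_regret_ge_switch_round) auto
  finally show ?thesis .
qed

theorem lemma2:
  fixes H :: nat
    and M :: "'u measure"
    and pol :: "nat \<Rightarrow> (real \<times> real) list \<Rightarrow> real \<Rightarrow> 'u \<Rightarrow> real"
  assumes "H \<ge> 2"
    and "prob_space M"
    and "\<And>t h v. (\<lambda>u. pol t h v u) \<in> borel_measurable M"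
    and "\<And>t h v u. 0 \<le> pol t h v u \<and> pol t h v u \<le> 1"
  shows "(1 / real H) * (\<Sum>tau=1..H. \<integral>u. dyn_regret pol H tau u \<partial>M)
           \<ge> 1/2 - 1 / (2 * real H)"
proof -
  interpret prob_space M by fact
  have integrable: "integrable M (dyn_regret pol H tau)" for tau
    by (rule integrable_dyn_regret[OF finite_measure_axioms assms(3,4)])
  have "1/2 - 1 / (2 * real H) \<le> (\<integral>u. (1 / real H) * (\<Sum>tau=1..H. dyn_regret pol H tau u) \<partial>M)"
  proof (rule integral_ge_const)
    show "integrable M (\<lambda>u. (1 / real H) * (\<Sum>tau=1..H. dyn_regret pol H tau u))"
      using integrable by auto
    have "1/2 - 1 / (2 * real H) = (1 / real H) * ((real H - 1) / 2)"
      using assms(1) by (simp add: field_simps)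
    also have "\<dots> \<le> (1 / real H) * (\<Sum>tau=1..H. dyn_regret pol H tau u)" for u
      using sum_dyn_regret_ge[of H pol, OF _ assms(4)] assms(1) by (intro mult_left_mono) auto
    finally show "AE u in M. 1/2 - 1 / (2 * real H) \<le> (1 / real H) * (\<Sum>tau=1..H. dyn_regret pol H tau u)"
      by simp
  qed
  also have "\<dots> = (1 / real H) * (\<Sum>tau=1..H. \<integral>u. dyn_regret pol H tau u \<partial>M)"
    using integrable by simp
  finally show ?thesis .
qed

end
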